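(* Let $V\in\mathcal C^\infty(\mathbb R^d,\mathbb R)$ and suppose there exist $C>0$ and a compact set $K\subset\mathbb R^d$ such that for all $x\in\mathbb R^d\setminus K$, $$V(x)\ge -C,\qquad |\nabla V(x)|\ge \tfrac1C,\qquad |\Delta V(x)|\le C|\nabla V(x)|^2 .$$ Then there exists $b\in\mathbb R$ such that for all $x\in\mathbb R^d$, $V(x)\ge \frac1C|x|+b$, with $C$ the constant above. *)

theory Defs
  imports "HOL-Analysis.Analysis"
begin

definition partial_deriv :: "(real^'n \<Rightarrow> real) \<Rightarrow> 'n \<Rightarrow> real^'n \<Rightarrow> real" where
  "partial_deriv f i x = frechet_derivative f (at x) (axis i 1)"

text \<open>C-infinity: f lies in a family of everywhere (Frechet) differentiable functions
  that is closed under taking partial derivatives, i.e. all partial derivatives of all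
  orders exist and are differentiable (hence continuous).\<close>
definition smooth :: "(real^'n \<Rightarrow> real) \<Rightarrow> bool" where
  "smooth f \<longleftrightarrow> (\<exists>F. f \<in> F \<and>
      (\<forall>g\<in>F. (\<forall>x. g differentiable (at x)) \<and> (\<forall>i. partial_deriv g i \<in> F)))"

definition grad :: "(real^'n \<Rightarrow> real) \<Rightarrow> real^'n \<Rightarrow> real^'n" where
  "grad f x = (\<chi> i. partial_deriv f i x)"

definition laplacian :: "(real^'n \<Rightarrow> real) \<Rightarrow> real^'n \<Rightarrow> real" where
  "laplacian f x = (\<Sum>i\<in>UNIV. partial_deriv (partial_deriv f i) i x)"

end

theory Submission
  imports Defs
begin

text \<open>
  Fix \<open>x\<close> and \<open>c > C\<close>. The function \<open>y \<mapsto> V y + |y - x| / c\<close> is coercive, because \<open>V\<close> is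
  bounded below, so it has a global minimiser \<open>y\<^sub>0\<close>. At a minimiser of \<open>V\<close> plus a
  \<open>1/c\<close>-Lipschitz penalty one has \<open>|\<nabla>V(y\<^sub>0)| \<le> 1/c < 1/C\<close>, hence \<open>y\<^sub>0 \<in> K\<close>, and therefore
  \<open>V x \<ge> V y\<^sub>0 + |y\<^sub>0 - x| / c \<ge> min\<^sub>K V + (|x| - max\<^sub>K |y|) / c\<close>. Letting \<open>c \<rightarrow> C\<close> gives the
  claim.
\<close>

lemma has_derivative_grad:
  fixes V :: "real^'n \<Rightarrow> real"
  assumes "V differentiable (at y)"
  shows "(V has_derivative (\<lambda>v. grad V y \<bullet> v)) (at y)"
proof -
  let ?D = "frechet_derivative V (at y)"
  have D: "(V has_derivative ?D) (at y)"
    using assms frechet_derivative_works by blast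
  then have lin: "linear ?D"
    using has_derivative_linear by blast
  have "?D = (\<lambda>v. grad V y \<bullet> v)"
  proof
    fix v
    have "?D v = ?D (\<Sum>i\<in>UNIV. v$i *\<^sub>R axis i 1)"
      using basis_expansion[of v] by (simp add: scalar_mult_eq_scaleR)
    also have "\<dots> = (\<Sum>i\<in>UNIV. v$i * ?D (axis i 1))"
      using lin by (simp add: linear_sum linear_scale)
    also have "\<dots> = grad V y \<bullet> v"
      by (simp add: grad_def partial_deriv_def inner_vec_def mult.commute)
    finally show "?D v = grad V y \<bullet> v" .
  qed
  with D show ?thesis
    by simp
qed

lemma has_real_derivative_along_line:
  fixes V :: "real^'n \<Rightarrow> real"
  assumes "V differentiable (at y)"
  shows "((\<lambda>t. V (y + t *\<^sub>R u)) has_real_derivative grad V y \<bullet> u) (at 0)"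
proof -
  have "((\<lambda>t. y + t *\<^sub>R u) has_derivative (\<lambda>t. t *\<^sub>R u)) (at 0)"
    by (auto intro!: derivative_eq_intros)
  moreover have "(V has_derivative (\<lambda>v. grad V y \<bullet> v)) (at ((\<lambda>t. y + t *\<^sub>R u) 0))"
    using has_derivative_grad[OF assms] by simp
  ultimately have "((\<lambda>t. V (y + t *\<^sub>R u)) has_derivative (\<lambda>t. grad V y \<bullet> (t *\<^sub>R u))) (at 0)"
    by (rule has_derivative_compose)
  moreover have "(\<lambda>t. grad V y \<bullet> (t *\<^sub>R u)) = (*) (grad V y \<bullet> u)"
    by (simp add: fun_eq_iff)
  ultimately show ?thesis
    by (simp add: has_field_derivative_def)
qed

lemma norm_grad_le_lipschitz_at_minimum:
  fixes V :: "real^'n \<Rightarrow> real"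
  assumes diff: "V differentiable (at y\<^sub>0)"
    and lip: "k-lipschitz_on UNIV p"
    and min: "\<forall>y. V y\<^sub>0 + p y\<^sub>0 \<le> V y + p y"
  shows "norm (grad V y\<^sub>0) \<le> k"
proof (rule ccontr)
  define g where "g = grad V y\<^sub>0"
  assume "\<not> norm (grad V y\<^sub>0) \<le> k"
  then have k_less: "k < norm g"
    by (simp add: g_def)
  have "0 \<le> k"
    using lip lipschitz_on_nonneg by blast
  define \<psi> where "\<psi> t = V (y\<^sub>0 + t *\<^sub>R (- g)) + t * (k * norm g)" for t
  have "((\<lambda>t. V (y\<^sub>0 + t *\<^sub>R (- g))) has_real_derivative - (g \<bullet> g)) (at 0)"
    using has_real_derivative_along_line[OF diff, of "- g"] by (simp add: g_def)
  then have "(\<psi> has_real_derivative - (g \<bullet> g) + k * norm g) (at 0)"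
    unfolding \<psi>_def by (rule DERIV_add) (auto intro!: derivative_eq_intros)
  moreover have "0 < norm g"
    using k_less \<open>0 \<le> k\<close> by linarith
  then have "- (g \<bullet> g) + k * norm g < 0"
    using mult_strict_right_mono[OF k_less] k_less
    by (simp add: power2_norm_eq_inner[symmetric] power2_eq_square)
  ultimately obtain d where "d > 0" and d: "\<forall>h>0. h < d \<longrightarrow> \<psi> (0 + h) < \<psi> 0"
    using DERIV_neg_dec_right by blast
  define t where "t = d / 2"
  define y where "y = y\<^sub>0 + t *\<^sub>R (- g)"
  have "p y - p y\<^sub>0 \<le> k * dist y y\<^sub>0"
    using lipschitz_onD[OF lip, of y y\<^sub>0] by (simp add: dist_real_def)
  also have "\<dots> = t * (k * norm g)"
    using \<open>d > 0\<close> by (simp add: y_def t_def dist_norm)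
  finally have "V y + p y \<le> \<psi> t + p y\<^sub>0"
    by (simp add: \<psi>_def y_def)
  also have "\<dots> < \<psi> 0 + p y\<^sub>0"
    using d \<open>d > 0\<close> by (simp add: t_def)
  also have "\<dots> = V y\<^sub>0 + p y\<^sub>0"
    by (simp add: \<psi>_def)
  finally show False
    using min by (meson not_le)
qed

lemma continuous_attains_global_inf:
  fixes f :: "'a::heine_borel \<Rightarrow> real"
  assumes "continuous_on UNIV f" and "bounded {y. f y \<le> f x}"
  shows "\<exists>y\<^sub>0. \<forall>y. f y\<^sub>0 \<le> f y"
proof -
  let ?S = "{y. f y \<le> f x}"
  have "compact ?S"
    using assms closed_Collect_le[OF assms(1) continuous_on_const] by (simp add: compact_eq_bounded_closed)
  moreover have "x \<in> ?S"
    by simp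
  ultimately obtain y\<^sub>0 where "y\<^sub>0 \<in> ?S" "\<forall>y\<in>?S. f y\<^sub>0 \<le> f y"
    using continuous_attains_inf[of ?S f] continuous_on_subset[OF assms(1)] by blast
  then have "f y\<^sub>0 \<le> f y" for y
    by (cases "y \<in> ?S") auto
  then show ?thesis
    by blast
qed

lemma exists_cone_below_with_apex_in:
  fixes V :: "real^'n \<Rightarrow> real"
  assumes diff: "\<forall>y. V differentiable (at y)"
    and low: "\<forall>y. L \<le> V y"
    and "c > 0"
    and steep: "\<forall>y. y \<notin> K \<longrightarrow> 1 / c < norm (grad V y)"
  shows "\<exists>y\<^sub>0\<in>K. V y\<^sub>0 + dist y\<^sub>0 x / c \<le> V x"
proof -
  define f where "f y = V y + dist y x / c" for y
  have "continuous_on UNIV V"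
    using diff differentiable_imp_continuous_within continuous_at_imp_continuous_on by blast
  then have "continuous_on UNIV f"
    unfolding f_def using \<open>c > 0\<close> by (intro continuous_intros) auto
  moreover have "{y. f y \<le> f x} \<subseteq> cball x (c * (V x - L))"
  proof
    fix y
    assume "y \<in> {y. f y \<le> f x}"
    then have "dist y x / c \<le> V x - L"
      using low[rule_format, of y] by (simp add: f_def)
    then show "y \<in> cball x (c * (V x - L))"
      using \<open>c > 0\<close> by (simp add: dist_commute divide_le_eq mult.commute)
  qed
  then have "bounded {y. f y \<le> f x}"
    using bounded_cball bounded_subset by blast
  ultimately obtain y\<^sub>0 where min: "\<forall>y. f y\<^sub>0 \<le> f y"
    using continuous_attains_global_inf by blast
  have "(1 / c)-lipschitz_on UNIV (\<lambda>y. dist y x / c)"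
  proof (rule lipschitz_onI)
    fix y z :: "real^'n"
    have "\<bar>dist y x - dist z x\<bar> \<le> dist y z"
      using abs_dist_diff_le[of y x z] by (simp add: dist_commute)
    then show "dist (dist y x / c) (dist z x / c) \<le> 1 / c * dist y z"
      using \<open>c > 0\<close> by (simp add: dist_real_def diff_divide_distrib[symmetric] abs_div divide_right_mono)
  qed (use \<open>c > 0\<close> in simp)
  with min diff have "norm (grad V y\<^sub>0) \<le> 1 / c"
    by (intro norm_grad_le_lipschitz_at_minimum) (auto simp: f_def)
  with steep have "y\<^sub>0 \<in> K"
    by force
  moreover have "f y\<^sub>0 \<le> V x"
    using min[rule_format, of x] by (simp add: f_def)
  ultimately show ?thesis
    unfolding f_def by blast
qed

lemma linear_lower_bound_if_steep_outside:
  fixes V :: "real^'n \<Rightarrow> real"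
  assumes "\<forall>y. V differentiable (at y)"
    and low: "\<forall>y. L \<le> V y"
    and "c > 0"
    and "\<forall>y. y \<notin> K \<longrightarrow> 1 / c < norm (grad V y)"
    and R: "\<forall>y\<in>K. norm y \<le> R"
  shows "L + (norm x - R) / c \<le> V x"
proof -
  obtain y\<^sub>0 where "y\<^sub>0 \<in> K" and below: "V y\<^sub>0 + dist y\<^sub>0 x / c \<le> V x"
    using exists_cone_below_with_apex_in assms by blast
  have "norm x - R \<le> dist y\<^sub>0 x"
    using R \<open>y\<^sub>0 \<in> K\<close> norm_triangle_ineq3[of x y\<^sub>0] by (auto simp: dist_norm norm_minus_commute)
  then have "(norm x - R) / c \<le> dist y\<^sub>0 x / c"
    using \<open>c > 0\<close> by (simp add: divide_right_mono)
  with below low[rule_format, of y\<^sub>0] show ?thesis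
    by linarith
qed

lemma bounded_below_if_bounded_below_outside_compact:
  fixes V :: "'a::topological_space \<Rightarrow> real"
  assumes "continuous_on UNIV V" and "compact K" and "\<forall>y. y \<notin> K \<longrightarrow> a \<le> V y"
  shows "\<exists>L. \<forall>y. L \<le> V y"
proof -
  have "compact (V ` K)"
    using assms(1,2) compact_continuous_image continuous_on_subset by blast
  then obtain B where B: "\<forall>y\<in>K. \<bar>V y\<bar> \<le> B"
    using compact_imp_bounded bounded_real by (metis image_eqI)
  have "min a (- B) \<le> V y" for y
    using B assms(3) by (cases "y \<in> K") (force simp: abs_le_iff min_le_iff_disj)+
  then show ?thesis
    by blast
qed

theorem lemma1:
  fixes V :: "real^'d \<Rightarrow> real" and C :: real and K :: "(real^'d) set"
  assumes "smooth V"
    and "C > 0"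
    and "compact K"
    and "\<forall>x. x \<notin> K \<longrightarrow>
           V x \<ge> - C \<and> norm (grad V x) \<ge> 1 / C \<and>
           \<bar>laplacian V x\<bar> \<le> C * (norm (grad V x))^2"
  shows "\<exists>b::real. \<forall>x. V x \<ge> (1 / C) * norm x + b"
proof -
  have diff: "\<forall>x. V differentiable (at x)"
    using assms(1) unfolding smooth_def by blast
  then have "continuous_on UNIV V"
    using differentiable_imp_continuous_within continuous_at_imp_continuous_on by blast
  then obtain L where low: "\<forall>y. L \<le> V y"
    using bounded_below_if_bounded_below_outside_compact assms(3,4) by blast
  obtain R where R: "\<forall>y\<in>K. norm y \<le> R"
    using compact_imp_bounded[OF assms(3)] bounded_iff by blast
  have bound: "L + (norm x - R) / c \<le> V x" if "C < c" for x c
  proof (rule linear_lower_bound_if_steep_outside[OF diff low _ _ R])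
    have "1 / c < 1 / C"
      using assms(2) \<open>C < c\<close> by (simp add: frac_less2)
    then show "\<forall>y. y \<notin> K \<longrightarrow> 1 / c < norm (grad V y)"
      using assms(4) by (meson less_le_trans)
  qed (use assms(2) \<open>C < c\<close> in simp)
  have "L + (norm x - R) / C \<le> V x" for x
  proof (rule tendsto_upperbound)
    show "((\<lambda>c. L + (norm x - R) / c) \<longlongrightarrow> L + (norm x - R) / C) (at_right C)"
      using assms(2) by (intro tendsto_intros) auto
    show "\<forall>\<^sub>F c in at_right C. L + (norm x - R) / c \<le> V x"
      using eventually_at_right_less by (rule eventually_mono) (rule bound)
  qed simp
  then show ?thesis
    by (intro exI[of _ "L - R / C"]) (simp add: diff_divide_distrib add.commute add_diff_eq)
qed

end
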